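(* Let $k\in\{1,2,\dots\}\cup\{\infty\}$. The group $D^k_{\mathrm{nb}}(\mathbb{R},0)$ is a normal subgroup of $H^k(\mathbb{R},0)$.
   Context: $H^k(\mathbb{R},0)$ is the group of homeomorphisms $h$ of $\mathbb{R}$ with $h(0)=0$ whose restriction to $\mathbb{R}\setminus\{0\}$ is a $C^k$-diffeomorphism of $\mathbb{R}\setminus\{0\}$. $D^k_{\mathrm{nb}}(\mathbb{R},0)$ is the group of $C^k$-diffeomorphisms of $\mathbb{R}$ that are the identity on some neighborhood of $0$. *)

theory Defs
  imports "HOL-Analysis.Analysis" "HOL-Algebra.Coset" "HOL-Library.Extended_Nat"
begin

definition Ck_on :: "enat \<Rightarrow> real set \<Rightarrow> (real \<Rightarrow> real) \<Rightarrow> bool" where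
  "Ck_on k S f \<longleftrightarrow>
     (\<forall>n::nat. enat n \<le> k \<longrightarrow> continuous_on S ((deriv ^^ n) f)) \<and>
     (\<forall>n::nat. enat n < k \<longrightarrow> (\<forall>x\<in>S. ((deriv ^^ n) f) differentiable (at x)))"

definition Ck_diffeo :: "enat \<Rightarrow> real set \<Rightarrow> (real \<Rightarrow> real) \<Rightarrow> bool" where
  "Ck_diffeo k U h \<longleftrightarrow> bij_betw h U U \<and> Ck_on k U h \<and> Ck_on k U (inv_into U h)"

definition Hk :: "enat \<Rightarrow> (real \<Rightarrow> real) \<Rightarrow> bool" where
  "Hk k h \<longleftrightarrow> (\<exists>g. homeomorphism UNIV UNIV h g) \<and> h 0 = 0 \<and> Ck_diffeo k (- {0}) h"

definition Dnb :: "enat \<Rightarrow> (real \<Rightarrow> real) \<Rightarrow> bool" where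
  "Dnb k h \<longleftrightarrow> Ck_diffeo k UNIV h \<and> (\<exists>e>0. \<forall>x. \<bar>x\<bar> < e \<longrightarrow> h x = x)"

definition Hk_group :: "enat \<Rightarrow> (real \<Rightarrow> real) monoid" where
  "Hk_group k = \<lparr>carrier = {h. Hk k h}, mult = (\<circ>), one = id\<rparr>"

end

theory Submission
  imports Defs
begin

text \<open>The subgroup D^k_nb(R,0) is exactly the set of elements of H^k(R,0) that are the
  identity on a neighbourhood of 0: such an element is C^k on R \ {0} and near 0, hence on R,
  and so is its inverse. Being the identity near 0 is clearly preserved by composition, inversion
  and conjugation by homeomorphisms fixing 0.\<close>

text \<open>Finite-order smoothness in recursive form (C^(n+1) means differentiable with C^n
  derivative), so that closure properties can be proved by induction on the order.\<close>

fun Cn_on :: "nat \<Rightarrow> real set \<Rightarrow> (real \<Rightarrow> real) \<Rightarrow> bool" where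
  "Cn_on 0 S f \<longleftrightarrow> continuous_on S f"
| "Cn_on (Suc n) S f \<longleftrightarrow>
     continuous_on S f \<and> (\<forall>x\<in>S. f differentiable (at x)) \<and> Cn_on n S (deriv f)"

lemma Cn_on_iff_higher_derivs:
  "Cn_on n S f \<longleftrightarrow> (\<forall>m\<le>n. continuous_on S ((deriv ^^ m) f)) \<and>
     (\<forall>m<n. \<forall>x\<in>S. ((deriv ^^ m) f) differentiable (at x))"
proof (induction n arbitrary: f)
  case 0
  then show ?case by simp
next
  case (Suc n)
  have all_le_Suc: "(\<forall>m\<le>Suc n. P m) \<longleftrightarrow> P 0 \<and> (\<forall>m\<le>n. P (Suc m))" for P
    using All_less_Suc2[of "Suc n" P] by (simp add: less_Suc_eq_le)
  have funpow_deriv_Suc: "(deriv ^^ Suc m) f = (deriv ^^ m) (deriv f)" for m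
    by (rule funpow_Suc_right[THEN fun_cong, unfolded comp_def])
  show ?case
    unfolding Cn_on.simps Suc.IH all_le_Suc All_less_Suc2 funpow_deriv_Suc funpow_0 by blast
qed

lemma Ck_on_iff_Cn_on: "Ck_on k S f \<longleftrightarrow> (\<forall>n. enat n \<le> k \<longrightarrow> Cn_on n S f)"
proof
  assume f: "Ck_on k S f"
  show "\<forall>n. enat n \<le> k \<longrightarrow> Cn_on n S f"
  proof (intro allI impI)
    fix n assume "enat n \<le> k"
    then have "\<forall>m\<le>n. enat m \<le> k" "\<forall>m<n. enat m < k"
      by (metis enat_ord_simps(1) order.trans, metis enat_ord_simps(2) order.strict_trans2)
    then show "Cn_on n S f" using f unfolding Cn_on_iff_higher_derivs Ck_on_def by blast
  qed
next
  assume f: "\<forall>n. enat n \<le> k \<longrightarrow> Cn_on n S f"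
  show "Ck_on k S f" unfolding Ck_on_def
  proof (intro conjI allI impI)
    fix n assume "enat n \<le> k"
    then show "continuous_on S ((deriv ^^ n) f)"
      using f Cn_on_iff_higher_derivs by blast
  next
    fix n assume "enat n < k"
    then have "enat (Suc n) \<le> k" by (simp add: Suc_ile_eq)
    then show "\<forall>x\<in>S. (deriv ^^ n) f differentiable at x"
      using f Cn_on_iff_higher_derivs[of "Suc n"] by blast
  qed
qed

lemma Cn_on_SucD: "Cn_on (Suc n) S f \<Longrightarrow> Cn_on n S f"
  by (induction n arbitrary: f) auto

lemma Cn_on_subset: "Cn_on n S f \<Longrightarrow> T \<subseteq> S \<Longrightarrow> Cn_on n T f"
  by (induction n arbitrary: f) (auto intro: continuous_on_subset)

lemma differentiable_at_cong_ev:
  fixes f g :: "real \<Rightarrow> real"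
  assumes "eventually (\<lambda>y. f y = g y) (nhds x)" "f differentiable (at x)"
  shows "g differentiable (at x)"
  using assms DERIV_cong_ev[OF refl assms(1) refl]
  by (metis DERIV_deriv_iff_real_differentiable real_differentiable_def)

lemma Cn_on_cong:
  assumes "open S" "\<And>x. x \<in> S \<Longrightarrow> f x = g x" "Cn_on n S f"
  shows "Cn_on n S g"
  using assms(2,3)
proof (induction n arbitrary: f g)
  case 0
  then show ?case using continuous_on_cong by force
next
  case (Suc n)
  have ev: "eventually (\<lambda>y. f y = g y) (nhds x)" if "x \<in> S" for x
    using Suc.prems(1) assms(1) that eventually_nhds by blast
  have "continuous_on S g" using Suc continuous_on_cong by force
  moreover have "g differentiable (at x)" if "x \<in> S" for x
    using differentiable_at_cong_ev[OF ev[OF that]] Suc.prems(2) that by simp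
  moreover have "Cn_on n S (deriv g)"
  proof (rule Suc.IH)
    show "deriv f x = deriv g x" if "x \<in> S" for x
      using deriv_cong_ev[OF ev[OF that] refl] .
    show "Cn_on n S (deriv f)"
      using Suc.prems(2) by simp
  qed
  ultimately show ?case by simp
qed

lemma Cn_on_open_Un:
  assumes "open A" "open B" "Cn_on n A f" "Cn_on n B f"
  shows "Cn_on n (A \<union> B) f"
  using assms(3,4) by (induction n arbitrary: f) (auto intro: continuous_on_open_Un assms)

lemma Cn_on_const: "Cn_on n S (\<lambda>x. c)"
  by (induction n arbitrary: c) auto

lemma Cn_on_ident: "Cn_on n S (\<lambda>x. x)"
  by (cases n) (auto simp: Cn_on_const)

lemma real_differentiable_iff_field_differentiable:
  "(f :: real \<Rightarrow> real) differentiable (at x) \<longleftrightarrow> f field_differentiable (at x)"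
  by (metis DERIV_deriv_iff_real_differentiable DERIV_deriv_iff_field_differentiable)

lemma Cn_on_add:
  assumes "open S" "Cn_on n S f" "Cn_on n S g"
  shows "Cn_on n S (\<lambda>x. f x + g x)"
  using assms(2,3)
proof (induction n arbitrary: f g)
  case 0
  then show ?case by (auto intro: continuous_intros)
next
  case (Suc n)
  have "deriv (\<lambda>x. f x + g x) x = deriv f x + deriv g x" if "x \<in> S" for x
    using Suc.prems that by (simp add: real_differentiable_iff_field_differentiable)
  moreover have "Cn_on n S (\<lambda>x. deriv f x + deriv g x)" using Suc by auto
  ultimately have "Cn_on n S (deriv (\<lambda>x. f x + g x))"
    using Cn_on_cong[OF assms(1)] by (metis (no_types, lifting))
  with Suc.prems show ?case by (simp add: continuous_on_add)
qed

lemma Cn_on_mult: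
  assumes "open S" "Cn_on n S f" "Cn_on n S g"
  shows "Cn_on n S (\<lambda>x. f x * g x)"
  using assms(2,3)
proof (induction n arbitrary: f g)
  case 0
  then show ?case by (auto intro: continuous_intros)
next
  case (Suc n)
  have "Cn_on n S (\<lambda>x. f x * deriv g x)" "Cn_on n S (\<lambda>x. deriv f x * g x)"
    using Suc.IH[of f "deriv g"] Suc.IH[of "deriv f" g] Cn_on_SucD Suc.prems by auto
  then have "Cn_on n S (\<lambda>x. f x * deriv g x + deriv f x * g x)"
    using Cn_on_add[OF assms(1)] by blast
  moreover have "deriv (\<lambda>x. f x * g x) x = f x * deriv g x + deriv f x * g x" if "x \<in> S" for x
    using Suc.prems that by (simp add: real_differentiable_iff_field_differentiable)
  ultimately have "Cn_on n S (deriv (\<lambda>x. f x * g x))"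
    using Cn_on_cong[OF assms(1)] by (metis (no_types, lifting))
  with Suc.prems show ?case by (simp add: continuous_on_mult)
qed

lemma Cn_on_compose:
  assumes "open S" "Cn_on n S f" "Cn_on n T g" "f ` S \<subseteq> T"
  shows "Cn_on n S (g \<circ> f)"
  using assms(2,3)
proof (induction n arbitrary: g)
  case 0
  then show ?case
    using continuous_on_compose continuous_on_subset[OF _ assms(4)] by (metis Cn_on.simps(1))
next
  case (Suc n)
  have "Cn_on n S (deriv g \<circ> f)"
    using Suc.IH[of "deriv g"] Cn_on_SucD[of n S f] Suc.prems by (simp add: comp_def)
  then have "Cn_on n S (\<lambda>x. (deriv g \<circ> f) x * deriv f x)"
    using Cn_on_mult[OF assms(1), of n "deriv g \<circ> f" "deriv f"] Suc.prems(1) by simp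
  moreover have "deriv (g \<circ> f) x = (deriv g \<circ> f) x * deriv f x" if "x \<in> S" for x
    using Suc.prems assms(4) that by (auto simp: real_derivative_chain)
  ultimately have "Cn_on n S (deriv (g \<circ> f))"
    using Cn_on_cong[OF assms(1)] by (metis (no_types, lifting))
  moreover have "(g \<circ> f) differentiable (at x)" if "x \<in> S" for x
    using Suc.prems assms(4) that by (auto intro: differentiable_chain_at)
  moreover have "continuous_on S (g \<circ> f)"
    using Suc.prems continuous_on_compose continuous_on_subset[OF _ assms(4)] by auto
  ultimately show ?case unfolding Cn_on.simps by blast
qed

lemma Ck_on_cong:
  assumes "open S" "\<And>x. x \<in> S \<Longrightarrow> f x = g x" "Ck_on k S f"
  shows "Ck_on k S g"
  using assms Cn_on_cong unfolding Ck_on_iff_Cn_on by blast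

lemma Ck_on_compose:
  assumes "open S" "Ck_on k S f" "Ck_on k T g" "f ` S \<subseteq> T"
  shows "Ck_on k S (g \<circ> f)"
  using assms Cn_on_compose unfolding Ck_on_iff_Cn_on by blast

lemma Ck_on_subset: "Ck_on k S f \<Longrightarrow> T \<subseteq> S \<Longrightarrow> Ck_on k T f"
  using Cn_on_subset unfolding Ck_on_iff_Cn_on by blast

lemma Ck_on_open_Un:
  assumes "open A" "open B" "Ck_on k A f" "Ck_on k B f"
  shows "Ck_on k (A \<union> B) f"
  using assms Cn_on_open_Un unfolding Ck_on_iff_Cn_on by blast

lemma Ck_on_id: "Ck_on k S id"
  using Cn_on_ident unfolding Ck_on_iff_Cn_on id_def by blast

lemma Ck_on_imp_continuous_on: "Ck_on k S f \<Longrightarrow> continuous_on S f"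
  unfolding Ck_on_def by (metis funpow_0 zero_enat_def zero_le)

lemma open_Compl_singleton: "open (- {a :: 'a :: t1_space})"
  by (simp add: open_Compl)

lemma Ck_on_UNIV_if_eventually_id:
  assumes "Ck_on k (- {a}) f" "eventually (\<lambda>x. f x = x) (nhds a)"
  shows "Ck_on k UNIV f"
proof -
  obtain S where S: "open S" "a \<in> S" "\<And>x. x \<in> S \<Longrightarrow> f x = x"
    using assms(2) unfolding eventually_nhds by blast
  have "Ck_on k S f"
    by (rule Ck_on_cong[OF \<open>open S\<close> _ Ck_on_id]) (simp add: S(3))
  then have "Ck_on k (- {a} \<union> S) f"
    using Ck_on_open_Un[OF open_Compl_singleton \<open>open S\<close> assms(1)] by blast
  moreover have "- {a} \<union> S = UNIV" using S(2) by auto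
  ultimately show ?thesis by simp
qed

lemma Ck_diffeo_if_inverse:
  assumes "open U" "Ck_on k U h" "Ck_on k U g" "h ` U \<subseteq> U" "g ` U \<subseteq> U"
    and "\<And>x. x \<in> U \<Longrightarrow> g (h x) = x" "\<And>y. y \<in> U \<Longrightarrow> h (g y) = y"
  shows "Ck_diffeo k U h"
proof -
  have bij: "bij_betw h U U"
    using assms(4-7) by (intro bij_betw_byWitness[where f' = g]) auto
  have "g y = inv_into U h y" if "y \<in> U" for y
    using bij that assms(5,7) by (intro inv_into_f_eq[symmetric]) (auto simp: bij_betw_def)
  then have "Ck_on k U (inv_into U h)"
    by (rule Ck_on_cong[OF assms(1) _ assms(3)])
  with bij assms(2) show ?thesis unfolding Ck_diffeo_def by blast
qed

lemma Ck_diffeo_inverse: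
  assumes "open U" "Ck_diffeo k U h" "\<And>y. y \<in> U \<Longrightarrow> g y \<in> U \<and> h (g y) = y"
  shows "Ck_diffeo k U g"
proof -
  have h: "bij_betw h U U" "Ck_on k U h" "Ck_on k U (inv_into U h)"
    using assms(2) unfolding Ck_diffeo_def by auto
  have "inv_into U h y = g y" if "y \<in> U" for y
    using h(1) assms(3)[OF that] by (metis bij_betw_inv_into_left)
  then have "Ck_on k U g"
    by (rule Ck_on_cong[OF assms(1) _ h(3)])
  moreover have "g (h x) = x" if "x \<in> U" for x
    using assms(3) h(1) that by (metis bij_betw_iff_bijections)
  ultimately show ?thesis
    using assms(1,3) h(1,2) by (intro Ck_diffeo_if_inverse[where g = h]) (auto simp: bij_betw_apply)
qed

lemma Ck_diffeo_compose:
  assumes "open U" "Ck_diffeo k U f" "Ck_diffeo k U g"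
  shows "Ck_diffeo k U (g \<circ> f)"
proof -
  have f: "bij_betw f U U" "Ck_on k U f" "Ck_on k U (inv_into U f)"
    and g: "bij_betw g U U" "Ck_on k U g" "Ck_on k U (inv_into U g)"
    using assms(2,3) unfolding Ck_diffeo_def by auto
  have maps: "f ` U \<subseteq> U" "g ` U \<subseteq> U" "inv_into U f ` U \<subseteq> U" "inv_into U g ` U \<subseteq> U"
    using f(1) g(1) bij_betw_imp_surj_on bij_betw_inv_into by blast+
  show ?thesis
  proof (rule Ck_diffeo_if_inverse[where g = "inv_into U f \<circ> inv_into U g"])
    show "Ck_on k U (g \<circ> f)" "Ck_on k U (inv_into U f \<circ> inv_into U g)"
      using Ck_on_compose[OF assms(1) f(2) g(2) maps(1)]
        Ck_on_compose[OF assms(1) g(3) f(3) maps(4)] .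
    show "(g \<circ> f) ` U \<subseteq> U" "(inv_into U f \<circ> inv_into U g) ` U \<subseteq> U"
      using maps by (auto simp: image_subset_iff)
  next
    fix x assume "x \<in> U"
    then show "(inv_into U f \<circ> inv_into U g) ((g \<circ> f) x) = x"
      using f(1) g(1) by (simp add: bij_betw_apply bij_betw_inv_into_left)
  next
    fix y assume "y \<in> U"
    then show "(g \<circ> f) ((inv_into U f \<circ> inv_into U g) y) = y"
      using f(1) g(1) maps(4) by (auto simp: bij_betw_inv_into_right)
  qed (rule assms(1))
qed

lemma Ck_diffeo_id: "open U \<Longrightarrow> Ck_diffeo k U id"
  by (rule Ck_diffeo_if_inverse[where g = id]) (auto simp: Ck_on_id)

lemma Ck_diffeo_restrict:
  assumes "open V" "V \<subseteq> U" "Ck_diffeo k U h" "bij_betw h V V"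
  shows "Ck_diffeo k V h"
proof -
  have h: "bij_betw h U U" "Ck_on k U h" "Ck_on k U (inv_into U h)"
    using assms(3) unfolding Ck_diffeo_def by auto
  have "inv_into U h y = inv_into V h y" if "y \<in> V" for y
  proof (rule inv_into_f_eq)
    show "inj_on h U" using h(1) by (rule bij_betw_imp_inj_on)
    have y: "y \<in> h ` V" using assms(4) that by (simp add: bij_betw_def)
    show "inv_into V h y \<in> U" using inv_into_into[OF y] assms(2) by blast
    show "h (inv_into V h y) = y" using f_inv_into_f[OF y] .
  qed
  then have "Ck_on k V (inv_into V h)"
    by (rule Ck_on_cong[OF assms(1) _ Ck_on_subset[OF h(3) assms(2)]])
  then show ?thesis unfolding Ck_diffeo_def
    using assms(4) Ck_on_subset[OF h(2) assms(2)] by blast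
qed

lemma Hk_inverse:
  assumes "Hk k h" "homeomorphism UNIV UNIV h g"
  shows "Hk k g"
proof -
  have hg: "\<And>x. g (h x) = x" "\<And>y. h (g y) = y" and "h 0 = 0"
    using assms unfolding homeomorphism_def Hk_def by auto
  then have "g 0 = 0" by metis
  have "g y \<in> - {0} \<and> h (g y) = y" if "y \<in> - {0}" for y
    using that hg(2)[of y] \<open>h 0 = 0\<close> by auto
  then have "Ck_diffeo k (- {0}) g"
    using assms(1) Ck_diffeo_inverse[OF open_Compl_singleton] unfolding Hk_def by blast
  with \<open>g 0 = 0\<close> show ?thesis
    using assms(2) homeomorphism_sym unfolding Hk_def by blast
qed

lemma Hk_compose:
  assumes "Hk k h1" "Hk k h2"
  shows "Hk k (h1 \<circ> h2)"
  using assms homeomorphism_compose Ck_diffeo_compose[OF open_Compl_singleton]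
  unfolding Hk_def by (metis comp_apply)

lemma Hk_id: "Hk k id"
  using homeomorphism_ident Ck_diffeo_id[OF open_Compl_singleton]
  unfolding Hk_def id_def by auto

lemma group_Hk_group: "group (Hk_group k)"
proof (rule groupI)
  fix h assume "h \<in> carrier (Hk_group k)"
  then have h: "Hk k h" by (simp add: Hk_group_def)
  then obtain g where g: "homeomorphism UNIV UNIV h g" using Hk_def by blast
  then have "g \<circ> h = id" unfolding homeomorphism_def by (auto simp: fun_eq_iff)
  with Hk_inverse[OF h g]
  show "\<exists>g\<in>carrier (Hk_group k). g \<otimes>\<^bsub>Hk_group k\<^esub> h = \<one>\<^bsub>Hk_group k\<^esub>"
    by (auto simp: Hk_group_def)
qed (auto simp: Hk_group_def Hk_compose Hk_id comp_assoc)

lemma inv_Hk_group: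
  assumes "Hk k h" "homeomorphism UNIV UNIV h g"
  shows "inv\<^bsub>Hk_group k\<^esub> h = g"
proof -
  have "g \<circ> h = id" using assms(2) unfolding homeomorphism_def by (auto simp: fun_eq_iff)
  then show ?thesis
    using group.inv_equality[OF group_Hk_group] assms Hk_inverse by (simp add: Hk_group_def)
qed

lemma eventually_id_inverse:
  assumes "homeomorphism UNIV UNIV h g" "eventually (\<lambda>x. h x = x) (nhds a)"
  shows "eventually (\<lambda>x. g x = x) (nhds a)"
  using assms(2) by (rule eventually_mono) (metis assms(1) homeomorphism_apply1 UNIV_I)

lemma Dnb_imp_Hk:
  assumes "Dnb k h"
  shows "Hk k h"
proof -
  have h: "bij h" "Ck_on k UNIV h" "Ck_on k UNIV (inv_into UNIV h)" "h 0 = 0"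
    using assms unfolding Dnb_def Ck_diffeo_def by auto
  then have "homeomorphism UNIV UNIV h (inv_into UNIV h)"
    unfolding homeomorphism_def using Ck_on_imp_continuous_on bij_betw_inv_into[OF h(1)]
    by (auto simp: bij_def surj_f_inv_f)
  moreover have "bij_betw h (- {0}) (- {0})"
    using bij_betw_DiffI[OF h(1), of "{0}" "{0}"] h(4) by (simp add: Compl_eq_Diff_UNIV)
  then have "Ck_diffeo k (- {0}) h"
    using Ck_diffeo_restrict[OF open_Compl_singleton] assms unfolding Dnb_def by blast
  ultimately show ?thesis unfolding Hk_def using h(4) by blast
qed

lemma Ck_diffeo_UNIV_if_Hk_eventually_id:
  assumes "Hk k h" "eventually (\<lambda>x. h x = x) (nhds 0)"
  shows "Ck_diffeo k UNIV h"
proof -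
  obtain g where g: "homeomorphism UNIV UNIV h g" using assms(1) Hk_def by blast
  have "eventually (\<lambda>x. g x = x) (nhds 0)"
    using eventually_id_inverse[OF g assms(2)] .
  then have "Ck_on k UNIV g"
    using Hk_inverse[OF assms(1) g] Ck_on_UNIV_if_eventually_id unfolding Hk_def Ck_diffeo_def by blast
  moreover have "Ck_on k UNIV h"
    using assms Ck_on_UNIV_if_eventually_id unfolding Hk_def Ck_diffeo_def by blast
  ultimately show ?thesis
    using g unfolding homeomorphism_def by (intro Ck_diffeo_if_inverse[where g = g]) auto
qed

lemma Dnb_iff_Hk_eventually_id:
  "Dnb k h \<longleftrightarrow> Hk k h \<and> eventually (\<lambda>x. h x = x) (nhds 0)"
proof -
  have "(\<exists>e>0. \<forall>x. \<bar>x\<bar> < e \<longrightarrow> h x = x) \<longleftrightarrow> eventually (\<lambda>x. h x = x) (nhds 0)"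
    by (simp add: eventually_nhds_metric dist_real_def)
  then show ?thesis
    using Dnb_imp_Hk Ck_diffeo_UNIV_if_Hk_eventually_id unfolding Dnb_def by blast
qed

lemma eventually_id_conjugate:
  fixes h g d :: "'a::topological_space \<Rightarrow> 'a"
  assumes "homeomorphism UNIV UNIV h g" "h a = a" "eventually (\<lambda>x. d x = x) (nhds a)"
  shows "eventually (\<lambda>y. (h \<circ> d \<circ> g) y = y) (nhds a)"
proof -
  obtain S where S: "open S" "a \<in> S" "\<And>x. x \<in> S \<Longrightarrow> d x = x"
    using assms(3) unfolding eventually_nhds by blast
  have hg: "\<And>y. h (g y) = y" "continuous_on UNIV g" and "g a = a"
    using assms(1,2) unfolding homeomorphism_def by (auto, metis)
  have "open (g -` S)" using open_vimage[OF S(1) hg(2)] .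
  moreover have "a \<in> g -` S" using \<open>g a = a\<close> S(2) by simp
  ultimately show ?thesis
    unfolding eventually_nhds using S(3) hg(1) by (intro exI[of _ "g -` S"]) auto
qed

lemma Dnb_id: "Dnb k id"
  by (simp add: Dnb_iff_Hk_eventually_id Hk_id)

lemma Dnb_compose:
  assumes "Dnb k a" "Dnb k b"
  shows "Dnb k (a \<circ> b)"
proof -
  have "eventually (\<lambda>x. a x = x \<and> b x = x) (nhds 0)"
    using assms unfolding Dnb_iff_Hk_eventually_id by (simp add: eventually_conj)
  then have "eventually (\<lambda>x. (a \<circ> b) x = x) (nhds 0)"
    by (rule eventually_mono) simp
  with assms show ?thesis unfolding Dnb_iff_Hk_eventually_id by (simp add: Hk_compose)
qed

lemma Dnb_inverse: "Dnb k d \<Longrightarrow> homeomorphism UNIV UNIV d g \<Longrightarrow> Dnb k g"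
  unfolding Dnb_iff_Hk_eventually_id using Hk_inverse eventually_id_inverse by blast

lemma Dnb_conjugate:
  assumes "Hk k h" "homeomorphism UNIV UNIV h g" "Dnb k d"
  shows "Dnb k (h \<circ> d \<circ> g)"
proof -
  have "Hk k (h \<circ> d \<circ> g)"
    using assms Hk_compose Hk_inverse unfolding Dnb_iff_Hk_eventually_id by blast
  moreover have "eventually (\<lambda>y. (h \<circ> d \<circ> g) y = y) (nhds 0)"
    using assms eventually_id_conjugate unfolding Dnb_iff_Hk_eventually_id Hk_def by blast
  ultimately show ?thesis unfolding Dnb_iff_Hk_eventually_id ..
qed

theorem lemma5p7:
  fixes k :: enat
  assumes "k \<ge> 1"
  shows "normal {h. Dnb k h} (Hk_group k)"
proof -
  interpret G: group "Hk_group k" by (rule group_Hk_group)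
  have "subgroup {h. Dnb k h} (Hk_group k)"
  proof (rule G.subgroupI)
    fix d assume "d \<in> {h. Dnb k h}"
    moreover obtain g where "homeomorphism UNIV UNIV d g"
      using \<open>d \<in> {h. Dnb k h}\<close> Dnb_imp_Hk unfolding Hk_def by blast
    ultimately show "inv\<^bsub>Hk_group k\<^esub> d \<in> {h. Dnb k h}"
      using inv_Hk_group Dnb_imp_Hk Dnb_inverse by auto
  qed (auto simp: Hk_group_def Dnb_imp_Hk Dnb_compose intro: Dnb_id)
  moreover have "h \<otimes>\<^bsub>Hk_group k\<^esub> d \<otimes>\<^bsub>Hk_group k\<^esub> inv\<^bsub>Hk_group k\<^esub> h \<in> {h. Dnb k h}"
    if "h \<in> carrier (Hk_group k)" "Dnb k d" for h d
  proof -
    have "Hk k h" using that(1) by (simp add: Hk_group_def)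
    moreover obtain g where "homeomorphism UNIV UNIV h g"
      using \<open>Hk k h\<close> unfolding Hk_def by blast
    ultimately show ?thesis
      using that(2) inv_Hk_group Dnb_conjugate by (simp add: Hk_group_def)
  qed
  ultimately show ?thesis using G.normal_inv_iff by blast
qed

end
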